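(* Let $k\geq 2$. Then $(\psi_k,\mathbf{d}_k)$ is a $2$-dimensional catalytic embedding from the set of unitary matrices with entries in $\mathcal{R}_{3\cdot 2^k}$ to the set of unitary matrices with entries in $\mathcal{R}_{3\cdot 2^{k-1}}$.
   Context: $\zeta_n=e^{2\pi i/n}$ and $\mathcal{R}_n$ is the smallest subring of $\mathbb{C}$ containing $1/2$ and $\zeta_n$. Every matrix $M$ with entries in $\mathcal{R}_{3\cdot 2^k}$ can be uniquely written as $M=A+B\zeta_{3\cdot2^k}$ with $A,B$ matrices over $\mathcal{R}_{3\cdot 2^{k-1}}$; define $\psi_k(M)=A\otimes I_2+B\otimes\Gamma_k$ with $\Gamma_k=\begin{bmatrix}0&1\\ \zeta_{3\cdot 2^{k-1}}&0\end{bmatrix}$, and $\mathbf{d}_k=\frac{1}{\sqrt2}\begin{bmatrix}1\\ \zeta_{3\cdot2^k}\end{bmatrix}$. For sets of unitary matrices $\mathcal{U},\mathcal{V}$, an $m$-dimensional catalytic embedding from $\mathcal{U}$ into $\mathcal{V}$ is a pair $(\phi,\mathbf{c})$ with $\phi:\mathcal{U}\to\mathcal{V}$ a function and $\mathbf{c}\in\mathbb{C}^m$ a unit vector such that (1) if $U\in\mathcal{U}$ has dimension $d$ then $\phi(U)$ has dimension $md$, and (2) $\phi(U)(\mathbf{u}\otimes\mathbf{c})=(U\mathbf{u})\otimes\mathbf{c}$ for all $\mathbf{u}\in\mathbb{C}^d$. *)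

theory Defs
  imports Complex_Main "Jordan_Normal_Form.Matrix"
begin

definition zeta :: "nat \<Rightarrow> complex" where
  "zeta n = exp (2 * of_real pi * \<i> / of_nat n)"

definition is_subring :: "complex set \<Rightarrow> bool" where
  "is_subring S \<longleftrightarrow> 0 \<in> S \<and> 1 \<in> S \<and>
     (\<forall>x\<in>S. \<forall>y\<in>S. x + y \<in> S \<and> x - y \<in> S \<and> x * y \<in> S)"

definition Rring :: "nat \<Rightarrow> complex set" where
  "Rring n = \<Inter> {S. is_subring S \<and> 1/2 \<in> S \<and> zeta n \<in> S}"

definition entries_in :: "complex mat \<Rightarrow> complex set \<Rightarrow> bool" where
  "entries_in M S \<longleftrightarrow> (\<forall>i<dim_row M. \<forall>j<dim_col M. M $$ (i,j) \<in> S)"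

definition adj :: "complex mat \<Rightarrow> complex mat" where
  "adj M = mat (dim_col M) (dim_row M) (\<lambda>(i,j). cnj (M $$ (j,i)))"

definition unitary_mat :: "complex mat \<Rightarrow> bool" where
  "unitary_mat U \<longleftrightarrow> dim_row U = dim_col U \<and>
     adj U * U = 1\<^sub>m (dim_row U) \<and> U * adj U = 1\<^sub>m (dim_row U)"

definition unitaries_over :: "nat \<Rightarrow> complex mat set" where
  "unitaries_over n = {U. unitary_mat U \<and> entries_in U (Rring n)}"

definition kron :: "complex mat \<Rightarrow> complex mat \<Rightarrow> complex mat" where
  "kron A B = mat (dim_row A * dim_row B) (dim_col A * dim_col B)
     (\<lambda>(i,j). A $$ (i div dim_row B, j div dim_col B) * B $$ (i mod dim_row B, j mod dim_col B))"

definition kron_vec :: "complex vec \<Rightarrow> complex vec \<Rightarrow> complex vec" where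
  "kron_vec u v = vec (dim_vec u * dim_vec v)
     (\<lambda>i. u $ (i div dim_vec v) * v $ (i mod dim_vec v))"

definition catalytic_embedding ::
  "nat \<Rightarrow> complex mat set \<Rightarrow> complex mat set \<Rightarrow> (complex mat \<Rightarrow> complex mat) \<Rightarrow> complex vec \<Rightarrow> bool" where
  "catalytic_embedding m UU VV phi c \<longleftrightarrow>
     dim_vec c = m \<and> (\<Sum>i<dim_vec c. (cmod (c $ i))^2) = 1 \<and>
     (\<forall>U\<in>UU. phi U \<in> VV \<and>
        (\<forall>d. U \<in> carrier_mat d d \<longrightarrow>
           phi U \<in> carrier_mat (m * d) (m * d) \<and>
           (\<forall>u \<in> carrier_vec d. phi U *\<^sub>v kron_vec u c = kron_vec (U *\<^sub>v u) c)))"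

definition decomp :: "nat \<Rightarrow> complex mat \<Rightarrow> complex mat \<times> complex mat" where
  "decomp k M = (THE (A,B). A \<in> carrier_mat (dim_row M) (dim_col M) \<and>
       B \<in> carrier_mat (dim_row M) (dim_col M) \<and>
       entries_in A (Rring (3 * 2^(k-1))) \<and> entries_in B (Rring (3 * 2^(k-1))) \<and>
       M = A + zeta (3 * 2^k) \<cdot>\<^sub>m B)"

definition Gamma :: "nat \<Rightarrow> complex mat" where
  "Gamma k = mat_of_rows_list 2 [[0, 1], [zeta (3 * 2^(k-1)), 0]]"

definition psi :: "nat \<Rightarrow> complex mat \<Rightarrow> complex mat" where
  "psi k M = (let (A, B) = decomp k M in kron A (1\<^sub>m 2) + kron B (Gamma k))"

definition dvec :: "nat \<Rightarrow> complex vec" where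
  "dvec k = vec_of_list [1 / of_real (sqrt 2), zeta (3 * 2^k) / of_real (sqrt 2)]"

end

theory Submission
  imports Defs "HOL-Computational_Algebra.Primes"
begin

(* Put m = 3 * 2^(k-1) and w = zeta (2 m), so that w^2 = zeta m. Every element of R_(2m) is
   a + w b with a, b in R_m, and uniquely so, because w lies in no subfield of C containing zeta m:
   for k = 2 take Q(sqrt -3), for k >= 3 a tower of quadratic extensions of Q(sqrt 3, i), using
   that a square root of w never lies in K(w) when i is in K and w is not.
   Hence psi applies entrywise the regular representation a + w b |-> [[a, b], [w^2 b, a]] of
   R_(2m) over R_m. This representation is a ring homomorphism and, as |w| = 1, commutes with
   complex conjugation up to transposition, so psi is multiplicative, commutes with the conjugate
   transpose and preserves unitarity. Row s of the matrix of x holds the coordinates of x w^s,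
   so (1, w), and with it d_k, is a common eigenvector: this is the catalytic identity. *)

section \<open>Square roots of non-squares are irrational\<close>

lemma Rats_square_neq_nat:
  fixes x :: real
  assumes "x \<in> \<rat>" and p: "prime p" "p dvd N" "\<not> p^2 dvd N"
  shows "x^2 \<noteq> real N"
proof
  assume xs: "x^2 = real N"
  obtain m n where n: "n \<noteq> 0" and mn: "\<bar>x\<bar> = real m / real n" and cop: "coprime m n"
    using assms(1) by (rule Rats_abs_nat_div_natE)
  have "real N = (real m / real n)^2" using mn xs by (metis power2_abs)
  hence "real (m^2) = real (N * n^2)" using n by (simp add: power_divide eq_divide_eq)
  hence eq: "m^2 = N * n^2" by (simp only: of_nat_eq_iff)
  hence "p dvd m" using p(1,2) by (metis dvd_mult2 prime_dvd_power)
  then obtain m' where m': "m = p * m'" ..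
  obtain N' where N': "N = p * N'" using p(2) ..
  have "p * (p * m'^2) = p * (N' * n^2)"
    using eq unfolding m' N' by (simp add: power_mult_distrib power2_eq_square mult_ac)
  hence "p * m'^2 = N' * n^2" using p(1) by (simp add: prime_gt_0_nat)
  moreover have "\<not> p dvd N'" using p(3) N' by (simp add: power2_eq_square)
  ultimately have "p dvd n" using p(1) by (metis dvd_triv_left prime_dvd_mult_iff prime_dvd_power)
  thus False using \<open>p dvd m\<close> cop p(1) by (meson coprime_common_divisor not_prime_unit)
qed

lemma Rats_complex_of_real:
  fixes q :: complex
  assumes "q \<in> \<rat>"
  shows "\<exists>r\<in>\<rat>. q = of_real r"
proof -
  obtain r where r: "q = of_rat r" using assms by (rule Rats_cases)
  obtain a b where "r = Fract a b" "b > 0" by (cases r)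
  hence "q = of_real (of_int a / of_int b)" using r by (simp add: of_rat_rat)
  thus ?thesis by (intro bexI[of _ "of_int a / of_int b"]) simp_all
qed

lemma Rats_complex_square_neq_nat:
  fixes x :: complex
  assumes "x \<in> \<rat>" "prime p" "p dvd N" "\<not> p^2 dvd N"
  shows "x^2 \<noteq> of_nat N"
proof -
  obtain r where r: "r \<in> \<rat>" "x = of_real r" using Rats_complex_of_real[OF assms(1)] ..
  show ?thesis
  proof
    assume "x^2 = of_nat N"
    hence "complex_of_real (r^2) = complex_of_real (real N)" unfolding r(2) by simp
    thus False using Rats_square_neq_nat[OF r(1) assms(2-4)] by (simp only: of_real_eq_iff)
  qed
qed

lemma prime_3: "prime (3::nat)"
  unfolding prime_nat_iff'
proof (intro conjI ballI)
  fix n :: nat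
  assume "n \<in> {2..<3}"
  hence "n = 2" by auto
  thus "\<not> n dvd 3" by simp
qed simp

lemma Rats_subset_Reals_complex: "(\<rat> :: complex set) \<subseteq> \<real>"
proof
  fix q :: complex
  assume "q \<in> \<rat>"
  then obtain r where "q = of_real r" using Rats_complex_of_real by metis
  thus "q \<in> \<real>" by simp
qed

lemma of_real_sqrt_square: "0 \<le> x \<Longrightarrow> complex_of_real (sqrt x) ^ 2 = of_real x"
  by (simp flip: of_real_power)

lemma of_real_sqrt_mult_self: "0 \<le> x \<Longrightarrow> complex_of_real (sqrt x) * of_real (sqrt x) = of_real x"
  by (simp flip: of_real_mult)

lemma sqrt_3_notin_Rats: "complex_of_real (sqrt 3) \<notin> \<rat>"
  using Rats_square_neq_nat[of "sqrt 3" 3 3] prime_3 by auto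


section \<open>Quadratic extensions of subfields of the complex numbers\<close>

lemma
  assumes "is_subring S"
  shows subring_zero: "0 \<in> S" and subring_one: "1 \<in> S"
    and subring_add: "x \<in> S \<Longrightarrow> y \<in> S \<Longrightarrow> x + y \<in> S"
    and subring_diff: "x \<in> S \<Longrightarrow> y \<in> S \<Longrightarrow> x - y \<in> S"
    and subring_mult: "x \<in> S \<Longrightarrow> y \<in> S \<Longrightarrow> x * y \<in> S"
  using assms unfolding is_subring_def by blast+

lemma subring_uminus: "is_subring S \<Longrightarrow> x \<in> S \<Longrightarrow> - x \<in> S"
  using subring_diff[of S 0 x] subring_zero by simp

lemma subring_power: "is_subring S \<Longrightarrow> x \<in> S \<Longrightarrow> x ^ n \<in> S"
  by (induction n) (auto intro: subring_one subring_mult)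

lemma subring_of_nat: "is_subring S \<Longrightarrow> of_nat n \<in> S"
  by (induction n) (auto intro: subring_zero subring_one subring_add)

lemma subring_sum: "is_subring S \<Longrightarrow> (\<And>i. i \<in> A \<Longrightarrow> f i \<in> S) \<Longrightarrow> sum f A \<in> S"
  by (induction A rule: infinite_finite_induct) (auto intro: subring_zero subring_add)

definition is_subfield :: "complex set \<Rightarrow> bool" where
  "is_subfield K \<longleftrightarrow> is_subring K \<and> (\<forall>x\<in>K. inverse x \<in> K)"

lemma subfield_divide: "is_subfield K \<Longrightarrow> x \<in> K \<Longrightarrow> y \<in> K \<Longrightarrow> x / y \<in> K"
  unfolding is_subfield_def divide_inverse by (blast intro: subring_mult)

lemma subfield_half:
  assumes "is_subfield K"
  shows "1/2 \<in> K"
proof -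
  have K: "is_subring K" using assms by (simp add: is_subfield_def)
  have "2 \<in> K" using subring_of_nat[OF K, of 2] by simp
  thus ?thesis by (rule subfield_divide[OF assms subring_one[OF K]])
qed

lemma subfield_Rats: "is_subfield \<rat>"
  unfolding is_subfield_def is_subring_def by simp

definition adjoin :: "complex set \<Rightarrow> complex \<Rightarrow> complex set" where
  "adjoin K w = {a + w * b | a b. a \<in> K \<and> b \<in> K}"

lemma adjoinI: "a \<in> K \<Longrightarrow> b \<in> K \<Longrightarrow> a + w * b \<in> adjoin K w"
  unfolding adjoin_def by blast

lemma adjoinE:
  assumes "x \<in> adjoin K w"
  obtains a b where "a \<in> K" "b \<in> K" "x = a + w * b"
  using assms unfolding adjoin_def by blast

lemma subset_adjoin: "is_subring K \<Longrightarrow> K \<subseteq> adjoin K w"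
  using adjoinI[of _ K 0 w] subring_zero by fastforce

lemma generator_in_adjoin: "is_subring K \<Longrightarrow> w \<in> adjoin K w"
  using adjoinI[of 0 K 1 w] subring_zero subring_one by simp

lemma adjoin_subset_Reals: "K \<subseteq> \<real> \<Longrightarrow> w \<in> \<real> \<Longrightarrow> adjoin K w \<subseteq> \<real>"
  unfolding adjoin_def by (auto intro!: Reals_add Reals_mult)

lemma subring_adjoin:
  assumes K: "is_subring K" and w: "w^2 \<in> K"
  shows "is_subring (adjoin K w)"
  unfolding is_subring_def
proof (intro conjI ballI)
  show "0 \<in> adjoin K w" "1 \<in> adjoin K w"
    using subset_adjoin[OF K] subring_zero[OF K] subring_one[OF K] by blast+
  fix x y assume "x \<in> adjoin K w" "y \<in> adjoin K w"
  then obtain a b c d where abcd: "a \<in> K" "b \<in> K" "c \<in> K" "d \<in> K"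
    and xy: "x = a + w * b" "y = c + w * d" by (metis adjoinE)
  have "x + y = (a + c) + w * (b + d)" "x - y = (a - c) + w * (b - d)"
    "x * y = (a * c + w^2 * (b * d)) + w * (a * d + b * c)"
    unfolding xy by (simp_all add: algebra_simps power2_eq_square)
  thus "x + y \<in> adjoin K w" "x - y \<in> adjoin K w" "x * y \<in> adjoin K w"
    using abcd K w by (auto intro!: adjoinI subring_add subring_diff subring_mult)
qed

lemma subfield_independent:
  assumes K: "is_subfield K" and w: "w \<notin> K" and ab: "a \<in> K" "b \<in> K" "a + w * b = 0"
  shows "a = 0" "b = 0"
proof -
  show "b = 0"
  proof (rule ccontr)
    assume "b \<noteq> 0"
    hence "w = - a / b" using ab(3) by (simp add: field_simps add_eq_0_iff)
    moreover have "- a / b \<in> K"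
      using K ab(1,2) by (simp add: subfield_divide subring_uminus is_subfield_def)
    ultimately show False using w by simp
  qed
  thus "a = 0" using ab(3) by simp
qed

lemma subfield_adjoin:
  assumes K: "is_subfield K" and w: "w^2 \<in> K" "w \<notin> K"
  shows "is_subfield (adjoin K w)"
proof -
  have K': "is_subring K" using K by (simp add: is_subfield_def)
  have "inverse x \<in> adjoin K w" if "x \<in> adjoin K w" for x
  proof -
    obtain a b where ab: "a \<in> K" "b \<in> K" "x = a + w * b"
      using \<open>x \<in> adjoin K w\<close> by (rule adjoinE)
    define n where "n = a^2 - w^2 * b^2"
    have n: "n \<in> K" unfolding n_def
      using K' ab w(1) by (metis subring_diff subring_mult subring_power)
    have norm: "x * (a + w * (- b)) = n"
      unfolding ab(3) n_def by (simp add: algebra_simps power2_eq_square)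
    show ?thesis
    proof (cases "n = 0")
      case True
      have "- b \<in> K" using K' ab(2) by (rule subring_uminus)
      have "x = 0 \<or> a + w * (- b) = 0" using norm True by simp
      hence "x = 0" using subfield_independent[OF K w(2) ab(1) \<open>- b \<in> K\<close>] ab(3) by auto
      thus ?thesis using subset_adjoin[OF K'] subring_zero[OF K'] by auto
    next
      case False
      hence "x \<noteq> 0" using norm by auto
      have "inverse x = inverse x * (x * (a + w * (- b))) / n" using norm False by simp
      also have "\<dots> = a / n + w * (- b / n)"
        using \<open>x \<noteq> 0\<close> by (simp add: diff_divide_distrib left_inverse flip: mult.assoc)
      finally have "inverse x = a / n + w * (- b / n)" .
      moreover have "a / n \<in> K" "- b / n \<in> K"
        using K ab n subring_uminus[OF K'] by (simp_all add: subfield_divide)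
      ultimately show ?thesis by (metis adjoinI)
    qed
  qed
  thus ?thesis using subring_adjoin[OF K' w(1)] by (simp add: is_subfield_def)
qed

lemma square_root_notin_subfield_adjoin:
  assumes K: "is_subfield K" and i: "\<i> \<in> K" and w: "w^2 \<in> K" "w \<notin> K" and v: "v^2 = w"
  shows "v \<notin> adjoin K w"
proof
  have K': "is_subring K" using K by (simp add: is_subfield_def)
  assume "v \<in> adjoin K w"
  then obtain a b where ab: "a \<in> K" "b \<in> K" "v = a + w * b" by (rule adjoinE)
  have "(a^2 + w^2 * b^2) + w * (2 * a * b - 1) = 0"
    using v unfolding ab(3) by (simp add: algebra_simps power2_eq_square)
  moreover have "a^2 + w^2 * b^2 \<in> K" "2 * a * b - 1 \<in> K"
    using K' ab w(1) subring_of_nat[OF K', of 2]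
    by (simp_all add: subring_add subring_diff subring_mult subring_power subring_one)
  ultimately have a2: "a^2 + w^2 * b^2 = 0" and ab1: "2 * a * b - 1 = 0"
    using subfield_independent[OF K w(2)] by blast+
  have "b \<noteq> 0" using ab1 by auto
  have "(w - \<i> * a / b) * (w + \<i> * a / b) = (a^2 + w^2 * b^2) / b^2"
    using \<open>b \<noteq> 0\<close> by (simp add: field_simps power2_eq_square)
  hence "w = \<i> * a / b \<or> w = - (\<i> * a / b)" using a2 by (auto simp: add_eq_0_iff)
  moreover have "\<i> * a / b \<in> K" "- (\<i> * a / b) \<in> K"
    using K i ab by (simp_all add: subfield_divide subring_mult subring_uminus is_subfield_def)
  ultimately show False using w(2) by auto
qed


section \<open>Roots of unity of order 3 * 2^k\<close>

lemma zeta_eq_cis: "zeta m = cis (2 * pi / m)"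
  unfolding zeta_def cis_conv_exp by (simp add: field_simps)

lemma norm_zeta [simp]: "cmod (zeta m) = 1"
  by (simp add: zeta_eq_cis)

lemma cnj_zeta_mult_zeta: "cnj (zeta m) * zeta m = 1"
  by (simp add: zeta_eq_cis cis_cnj cis_mult)

lemma zeta_double_square: "m > 0 \<Longrightarrow> zeta (2 * m) ^ 2 = zeta m"
  by (simp add: zeta_eq_cis DeMoivre)

lemma cnj_zeta_eq_power:
  assumes "m > 0"
  shows "cnj (zeta m) = zeta m ^ (m - 1)"
proof -
  have "zeta m ^ m = 1" using assms by (simp add: zeta_eq_cis DeMoivre)
  hence "cnj (zeta m) = cnj (zeta m) * zeta m * zeta m ^ (m - 1)"
    using assms by (metis Suc_diff_1 mult.assoc mult_1_right power_Suc)
  thus ?thesis by (simp add: cnj_zeta_mult_zeta)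
qed

lemma zeta_3_power2_Suc_square: "zeta (3 * 2 ^ Suc n) ^ 2 = zeta (3 * 2 ^ n)"
  using zeta_double_square[of "3 * 2 ^ n"] by (simp add: mult.left_commute)

lemma zeta_3_power2_square: "k \<ge> 1 \<Longrightarrow> zeta (3 * 2^k) ^ 2 = zeta (3 * 2^(k-1))"
  using zeta_3_power2_Suc_square[of "k - 1"] by simp

lemma zeta_6: "zeta 6 = 1/2 + \<i> * of_real (sqrt 3) / 2"
proof -
  have "2 * pi / 6 = pi / 3" by simp
  thus ?thesis by (simp add: zeta_eq_cis cis.code cos_60 sin_60 complex_eq_iff)
qed

lemma zeta_12: "zeta 12 = of_real (sqrt 3) / 2 + \<i> / 2"
proof -
  have "2 * pi / 12 = pi / 6" by simp
  thus ?thesis by (simp add: zeta_eq_cis cis.code cos_30 sin_30 complex_eq_iff)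
qed

lemma zeta_24_mult_zeta_12: "zeta 24 * zeta 12 = (1 + \<i>) * of_real (sqrt 2) / 2"
proof -
  have "zeta 24 * zeta 12 = cis (2 * pi / 24 + 2 * pi / 12)"
    by (simp only: zeta_eq_cis cis_mult of_nat_numeral)
  also have "2 * pi / 24 + 2 * pi / 12 = pi / 4" by simp
  finally show ?thesis by (simp add: cis.code cos_45 sin_45 complex_eq_iff)
qed

lemma zeta_12_notin_subfield: "\<exists>F. is_subfield F \<and> zeta 6 \<in> F \<and> zeta 12 \<notin> F"
proof (intro exI conjI)
  let ?s = "\<i> * complex_of_real (sqrt 3)"
  have "?s \<notin> \<rat>" using Rats_subset_Reals_complex by (auto simp: complex_is_Real_iff)
  thus "is_subfield (adjoin \<rat> ?s)"
    by (intro subfield_adjoin subfield_Rats) (simp_all add: power_mult_distrib of_real_sqrt_square)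
  show "zeta 6 \<in> adjoin \<rat> ?s" using adjoinI[of "1/2" \<rat> "1/2" ?s] by (simp add: zeta_6)
  show "zeta 12 \<notin> adjoin \<rat> ?s"
  proof
    assume "zeta 12 \<in> adjoin \<rat> ?s"
    then obtain a b where "a \<in> \<rat>" "b \<in> \<rat>" and ab: "zeta 12 = a + ?s * b" by (rule adjoinE)
    then obtain ra rb where "ra \<in> \<rat>" "a = of_real ra" "b = of_real rb"
      using Rats_complex_of_real by metis
    hence "sqrt 3 = 2 * ra" using arg_cong[OF ab, of Re] by (simp add: zeta_12)
    hence "(2 * ra)^2 = (sqrt 3)^2" by simp
    hence "(2 * ra)^2 = real 3" by simp
    thus False using Rats_square_neq_nat[of "2 * ra" 3 3] \<open>ra \<in> \<rat>\<close> prime_3 by simp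
  qed
qed

lemma subfield_Rats_sqrt_3: "is_subfield (adjoin \<rat> (of_real (sqrt 3)))"
  using sqrt_3_notin_Rats by (intro subfield_adjoin subfield_Rats) (simp_all add: of_real_sqrt_square)

lemma sqrt_2_notin_Rats_sqrt_3: "complex_of_real (sqrt 2) \<notin> adjoin \<rat> (of_real (sqrt 3))"
proof
  assume "complex_of_real (sqrt 2) \<in> adjoin \<rat> (of_real (sqrt 3))"
  then obtain p q :: complex
    where pq: "p \<in> \<rat>" "q \<in> \<rat>" and eq: "of_real (sqrt 2) = p + of_real (sqrt 3) * q"
    by (rule adjoinE)
  have "(p^2 + 3 * q^2 - 2) + of_real (sqrt 3) * (2 * p * q) = (p + of_real (sqrt 3) * q)^2 - 2"
    by (simp add: algebra_simps power2_eq_square of_real_sqrt_mult_self)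
  also have "\<dots> = 0" unfolding eq[symmetric] by (simp add: of_real_sqrt_square)
  finally have eq0: "(p^2 + 3 * q^2 - 2) + of_real (sqrt 3) * (2 * p * q) = 0" .
  have "p^2 + 3 * q^2 - 2 \<in> \<rat>" "2 * p * q \<in> \<rat>" using pq by simp_all
  hence "p^2 + 3 * q^2 - 2 = 0" "2 * p * q = 0"
    using subfield_independent[OF subfield_Rats sqrt_3_notin_Rats _ _ eq0] by simp_all
  hence "p^2 = of_nat 2 \<or> (3 * q)^2 = of_nat 6" by (auto simp: power_mult_distrib)
  moreover have "3 * q \<in> \<rat>" using pq(2) by simp
  ultimately show False
    using Rats_complex_square_neq_nat[of p 2 2] Rats_complex_square_neq_nat[of "3 * q" 2 6] pq(1)
    by auto
qed

(* zeta 24 * zeta 12 = (1 + i) / sqrt 2, so zeta 24 in Q(sqrt 3, i) would put sqrt 2 into the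
   real field Q(sqrt 3). *)
lemma zeta_24_notin_subfield: "\<exists>F. is_subfield F \<and> \<i> \<in> F \<and> zeta 12 \<in> F \<and> zeta 24 \<notin> F"
proof (intro exI conjI)
  let ?K = "adjoin \<rat> (of_real (sqrt 3))"
  have K: "is_subring ?K" using subfield_Rats_sqrt_3 by (simp add: is_subfield_def)
  have real: "?K \<subseteq> \<real>" by (intro adjoin_subset_Reals Rats_subset_Reals_complex) simp
  hence "\<i> \<notin> ?K" by (auto simp: complex_is_Real_iff)
  moreover have "\<i>^2 \<in> ?K" using subring_uminus[OF K subring_one[OF K]] by simp
  ultimately show F: "is_subfield (adjoin ?K \<i>)" by (intro subfield_adjoin subfield_Rats_sqrt_3)
  show i: "\<i> \<in> adjoin ?K \<i>" using K by (rule generator_in_adjoin)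
  have "of_real (sqrt 3) / 2 \<in> ?K" using adjoinI[of 0 \<rat> "1/2"] by simp
  moreover have "1/2 \<in> ?K" using subfield_half[OF subfield_Rats_sqrt_3] .
  moreover have "zeta 12 = of_real (sqrt 3) / 2 + \<i> * (1/2)" by (simp add: zeta_12)
  ultimately show "zeta 12 \<in> adjoin ?K \<i>" by (metis adjoinI)
  show "zeta 24 \<notin> adjoin ?K \<i>"
  proof
    assume "zeta 24 \<in> adjoin ?K \<i>"
    hence "2 * (zeta 24 * zeta 12) / (1 + \<i>) \<in> adjoin ?K \<i>"
      using F i \<open>zeta 12 \<in> adjoin ?K \<i>\<close> subring_of_nat[of _ 2]
      by (simp add: is_subfield_def subfield_divide subring_mult subring_add subring_one)
    moreover have "2 * (zeta 24 * zeta 12) / (1 + \<i>) = of_real (sqrt 2)"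
    proof -
      have "1 + \<i> \<noteq> 0" by (simp add: complex_eq_iff)
      thus ?thesis unfolding zeta_24_mult_zeta_12 by simp
    qed
    ultimately have "of_real (sqrt 2) \<in> adjoin ?K \<i>" by simp
    then obtain a b where ab: "a \<in> ?K" "b \<in> ?K" "of_real (sqrt 2) = a + \<i> * b" by (rule adjoinE)
    then obtain ra rb where "a = of_real ra" "b = of_real rb" using real by (metis Reals_cases subsetD)
    hence "b = 0" "of_real (sqrt 2) = a" using ab(3) by (simp_all add: complex_eq_iff)
    thus False using ab(1) sqrt_2_notin_Rats_sqrt_3 by simp
  qed
qed

(* The tower needs i in the base field (square_root_notin_subfield_adjoin), so it starts at
   Q(sqrt 3, i); for k = 2 the field Q(sqrt -3) is used instead. *)
lemma subfield_separating_zeta: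
  assumes "k \<ge> 2"
  shows "\<exists>F. is_subfield F \<and> zeta (3 * 2^(k-1)) \<in> F \<and> zeta (3 * 2^k) \<notin> F"
proof -
  have "\<exists>F. is_subfield F \<and> \<i> \<in> F \<and> zeta (3 * 2^Suc (Suc j)) \<in> F
          \<and> zeta (3 * 2^Suc (Suc (Suc j))) \<notin> F" for j
  proof (induction j)
    case 0
    show ?case using zeta_24_notin_subfield by simp
  next
    case (Suc j)
    let ?w = "zeta (3 * 2^Suc (Suc (Suc j)))"
    obtain F where F: "is_subfield F" "\<i> \<in> F" "zeta (3 * 2^Suc (Suc j)) \<in> F" "?w \<notin> F"
      using Suc.IH by blast
    have F': "is_subring F" using F(1) by (simp add: is_subfield_def)
    have w2: "?w^2 \<in> F" using F(3) by (simp only: zeta_3_power2_Suc_square)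
    have "is_subfield (adjoin F ?w)" using F(1) w2 F(4) by (rule subfield_adjoin)
    moreover have "\<i> \<in> adjoin F ?w" using F(2) subset_adjoin[OF F'] by blast
    moreover have "?w \<in> adjoin F ?w" using F' by (rule generator_in_adjoin)
    moreover have "zeta (3 * 2^Suc (Suc (Suc (Suc j)))) \<notin> adjoin F ?w"
      by (rule square_root_notin_subfield_adjoin[OF F(1,2) w2 F(4) zeta_3_power2_Suc_square])
    ultimately show ?case by blast
  qed
  note tower = this
  show ?thesis
  proof (cases "k = 2")
    case True
    thus ?thesis using zeta_12_notin_subfield by simp
  next
    case False
    define j where "j = k - 3"
    have k: "k = Suc (Suc (Suc j))" using assms False unfolding j_def by simp
    show ?thesis using tower[of j] unfolding k diff_Suc_1 by blast
  qed
qed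


section \<open>The rings R_n\<close>

lemma Rring_iff: "x \<in> Rring n \<longleftrightarrow> (\<forall>S. is_subring S \<longrightarrow> 1/2 \<in> S \<longrightarrow> zeta n \<in> S \<longrightarrow> x \<in> S)"
  unfolding Rring_def by blast

lemma subring_Rring: "is_subring (Rring n)"
  unfolding is_subring_def[of "Rring n"]
  by (auto simp: Rring_iff intro: subring_zero subring_one subring_add subring_diff subring_mult)

lemma half_in_Rring: "1/2 \<in> Rring n" and zeta_in_Rring: "zeta n \<in> Rring n"
  unfolding Rring_def by blast+

lemma Rring_subset_subring: "is_subring S \<Longrightarrow> 1/2 \<in> S \<Longrightarrow> zeta n \<in> S \<Longrightarrow> Rring n \<subseteq> S"
  unfolding Rring_def by blast

lemma cnj_in_Rring:
  assumes "n > 0" "x \<in> Rring n"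
  shows "cnj x \<in> Rring n"
proof -
  have "Rring n \<subseteq> {x. cnj x \<in> Rring n}"
  proof (rule Rring_subset_subring)
    show "is_subring {x. cnj x \<in> Rring n}"
      using subring_Rring[of n] unfolding is_subring_def by auto
    show "1/2 \<in> {x. cnj x \<in> Rring n}" using half_in_Rring by simp
    show "zeta n \<in> {x. cnj x \<in> Rring n}"
      using subring_power[OF subring_Rring zeta_in_Rring] cnj_zeta_eq_power[OF assms(1)] by simp
  qed
  thus ?thesis using assms(2) by blast
qed

lemma Rring_double_subset_adjoin:
  assumes "m > 0"
  shows "Rring (2 * m) \<subseteq> adjoin (Rring m) (zeta (2 * m))"
proof (rule Rring_subset_subring)
  show "is_subring (adjoin (Rring m) (zeta (2 * m)))"
    using subring_adjoin[OF subring_Rring] zeta_double_square[OF assms] zeta_in_Rring by simp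
  show "1/2 \<in> adjoin (Rring m) (zeta (2 * m))"
    using subset_adjoin[OF subring_Rring] half_in_Rring by blast
  show "zeta (2 * m) \<in> adjoin (Rring m) (zeta (2 * m))"
    by (rule generator_in_adjoin[OF subring_Rring])
qed

lemma Rring_zeta_independent:
  assumes "k \<ge> 2" and ab: "a \<in> Rring (3 * 2^(k-1))" "b \<in> Rring (3 * 2^(k-1))"
    and "a + zeta (3 * 2^k) * b = 0"
  shows "b = 0"
proof -
  obtain F where F: "is_subfield F" "zeta (3 * 2^(k-1)) \<in> F" "zeta (3 * 2^k) \<notin> F"
    using subfield_separating_zeta[OF assms(1)] by blast
  have "Rring (3 * 2^(k-1)) \<subseteq> F"
    using F(1,2) subfield_half[OF F(1)]
    by (intro Rring_subset_subring) (simp_all add: is_subfield_def)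
  thus ?thesis using subfield_independent(2)[OF F(1,3)] ab assms(4) by blast
qed


lemma sum_lessThan_double:
  "(\<Sum>l<2 * (n::nat). f l) = (\<Sum>p<n. \<Sum>u<2. f (2 * p + u))"
proof (induction n)
  case (Suc n)
  have "2 * Suc n = Suc (Suc (2 * n))" by simp
  thus ?case using Suc by (simp add: numeral_2_eq_2 add.assoc)
qed simp

lemma index_mult_mat_sum:
  "i < dim_row A \<Longrightarrow> j < dim_col B \<Longrightarrow> dim_col A = dim_row B \<Longrightarrow>
    (A * B) $$ (i, j) = (\<Sum>l<dim_col A. A $$ (i, l) * B $$ (l, j))"
  by (auto simp: scalar_prod_def atLeast0LessThan intro!: sum.cong)

lemma index_mult_mat_vec_sum:
  "i < dim_row A \<Longrightarrow> dim_vec v = dim_col A \<Longrightarrow> (A *\<^sub>v v) $ i = (\<Sum>l<dim_col A. A $$ (i, l) * v $ l)"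
  by (auto simp: scalar_prod_def atLeast0LessThan intro!: sum.cong)

lemma adj_dims [simp]: "dim_row (adj M) = dim_col M" "dim_col (adj M) = dim_row M"
  by (simp_all add: adj_def)

lemma index_adj [simp]: "i < dim_col M \<Longrightarrow> j < dim_row M \<Longrightarrow> adj M $$ (i, j) = cnj (M $$ (j, i))"
  by (simp add: adj_def)

lemma entries_inD: "entries_in M S \<Longrightarrow> i < dim_row M \<Longrightarrow> j < dim_col M \<Longrightarrow> M $$ (i, j) \<in> S"
  unfolding entries_in_def by blast

lemma entries_in_mono: "entries_in M S \<Longrightarrow> S \<subseteq> T \<Longrightarrow> entries_in M T"
  unfolding entries_in_def by blast

lemma less_2_cases: "(s::nat) < 2 \<Longrightarrow> s = 0 \<or> s = 1"
  by auto


section \<open>The regular representation of a quadratic extension\<close>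

locale quadratic_extension =
  fixes R :: "complex set" and w :: complex
  assumes subring: "is_subring R"
    and cnj_closed: "x \<in> R \<Longrightarrow> cnj x \<in> R"
    and square_in: "w^2 \<in> R"
    and norm_w: "cmod w = 1"
    and independent: "a \<in> R \<Longrightarrow> b \<in> R \<Longrightarrow> a + w * b = 0 \<Longrightarrow> b = 0"
begin

lemma coeffs_unique:
  assumes "a \<in> R" "b \<in> R" "a' \<in> R" "b' \<in> R" "a + w * b = a' + w * b'"
  shows "a = a'" "b = b'"
proof -
  have "(a - a') + w * (b - b') = 0" using assms(5) by (simp add: algebra_simps)
  hence "b - b' = 0" using independent subring_diff[OF subring] assms(1-4) by blast
  thus "b = b'" by simp
  thus "a = a'" using assms(5) by simp
qed

definition coeffs :: "complex \<Rightarrow> complex \<times> complex" where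
  "coeffs x = (THE (a, b). a \<in> R \<and> b \<in> R \<and> x = a + w * b)"

lemma coeffs_eq:
  assumes "a \<in> R" "b \<in> R"
  shows "coeffs (a + w * b) = (a, b)"
  unfolding coeffs_def
proof (rule the_equality)
  fix p
  assume "case p of (a', b') \<Rightarrow> a' \<in> R \<and> b' \<in> R \<and> a + w * b = a' + w * b'"
  then obtain a' b' where p: "p = (a', b')" and a'b': "a' \<in> R" "b' \<in> R" "a + w * b = a' + w * b'"
    by (cases p) auto
  show "p = (a, b)" unfolding p using coeffs_unique[OF assms a'b'] by simp
qed (use assms in simp)

(* For x = a + w b, rep x is the matrix [[a, b], [w^2 b, a]]: row s holds the coordinates of
   x * w^s in the R-basis (1, w). *)
definition rep :: "complex \<Rightarrow> nat \<Rightarrow> nat \<Rightarrow> complex" where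
  "rep x s t = (case coeffs x of (a, b) \<Rightarrow> if s = t then a else if s = 0 then b else w^2 * b)"

lemma rep_eq:
  "a \<in> R \<Longrightarrow> b \<in> R \<Longrightarrow> rep (a + w * b) s t = (if s = t then a else if s = 0 then b else w^2 * b)"
  by (simp add: rep_def coeffs_eq)

lemma subring_adjoin_self: "is_subring (adjoin R w)"
  by (rule subring_adjoin[OF subring square_in])

lemma cnj_w: "cnj w = w * cnj (w^2)"
proof -
  have "cnj w * w = 1" using norm_w by (simp add: complex_norm_square[symmetric] mult.commute)
  moreover have "w * cnj (w^2) = (cnj w * w) * cnj w" by (simp add: power2_eq_square mult_ac)
  ultimately show ?thesis by simp
qed

lemma cnj_adjoin_eq: "cnj (a + w * b) = cnj a + w * (cnj (w^2) * cnj b)"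
proof -
  have "cnj (a + w * b) = cnj a + cnj w * cnj b" by simp
  also have "\<dots> = cnj a + w * (cnj (w^2) * cnj b)" by (simp only: cnj_w mult.assoc)
  finally show ?thesis .
qed

lemma cnj_in_adjoin:
  assumes "x \<in> adjoin R w"
  shows "cnj x \<in> adjoin R w"
proof -
  obtain a b where ab: "a \<in> R" "b \<in> R" "x = a + w * b" using assms by (rule adjoinE)
  have "cnj (w^2) * cnj b \<in> R"
    using cnj_closed[OF square_in] cnj_closed[OF ab(2)] by (rule subring_mult[OF subring])
  thus ?thesis unfolding ab(3) cnj_adjoin_eq by (rule adjoinI[OF cnj_closed[OF ab(1)]])
qed

lemma rep_in: "x \<in> adjoin R w \<Longrightarrow> rep x s t \<in> R"
  by (elim adjoinE) (simp add: rep_eq square_in subring_mult[OF subring])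

lemma rep_decomposition: "x \<in> adjoin R w \<Longrightarrow> x = rep x 0 0 + w * rep x 0 1"
  by (elim adjoinE) (simp add: rep_eq)

lemma rep_zero: "rep 0 s t = 0"
  using rep_eq[OF subring_zero[OF subring] subring_zero[OF subring]] by simp

lemma rep_one: "rep 1 s t = (if s = t then 1 else 0)"
  using rep_eq[OF subring_one[OF subring] subring_zero[OF subring]] by simp

lemma rep_add:
  assumes "x \<in> adjoin R w" "y \<in> adjoin R w"
  shows "rep (x + y) s t = rep x s t + rep y s t"
proof -
  obtain a b where ab: "a \<in> R" "b \<in> R" "x = a + w * b" using assms(1) by (rule adjoinE)
  obtain c d where cd: "c \<in> R" "d \<in> R" "y = c + w * d" using assms(2) by (rule adjoinE)
  have "x + y = (a + c) + w * (b + d)" unfolding ab(3) cd(3) by (simp add: algebra_simps)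
  hence "rep (x + y) s t = (if s = t then a + c else if s = 0 then b + d else w^2 * (b + d))"
    using ab cd by (simp only: rep_eq subring_add[OF subring])
  moreover have "rep x s t = (if s = t then a else if s = 0 then b else w^2 * b)"
    unfolding ab(3) using ab(1,2) by (rule rep_eq)
  moreover have "rep y s t = (if s = t then c else if s = 0 then d else w^2 * d)"
    unfolding cd(3) using cd(1,2) by (rule rep_eq)
  ultimately show ?thesis by (simp add: algebra_simps)
qed

lemma rep_sum:
  "(\<And>i. i \<in> A \<Longrightarrow> f i \<in> adjoin R w) \<Longrightarrow> rep (\<Sum>i\<in>A. f i) s t = (\<Sum>i\<in>A. rep (f i) s t)"
proof (induction A rule: infinite_finite_induct)
  case (insert i A)
  thus ?case by (simp add: rep_add subring_sum[OF subring_adjoin_self])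
qed (simp_all add: rep_zero)

lemma rep_mult:
  assumes "x \<in> adjoin R w" "y \<in> adjoin R w" "s < 2" "t < 2"
  shows "rep (x * y) s t = (\<Sum>u<2. rep x s u * rep y u t)"
proof -
  obtain a b where ab: "a \<in> R" "b \<in> R" "x = a + w * b" using assms(1) by (rule adjoinE)
  obtain c d where cd: "c \<in> R" "d \<in> R" "y = c + w * d" using assms(2) by (rule adjoinE)
  have "x * y = (a * c + w^2 * (b * d)) + w * (a * d + b * c)"
    unfolding ab(3) cd(3) by (simp add: algebra_simps power2_eq_square)
  moreover have "a * c + w^2 * (b * d) \<in> R" "a * d + b * c \<in> R"
    using ab cd square_in by (simp_all add: subring_add[OF subring] subring_mult[OF subring])
  ultimately have lhs: "rep (x * y) s t = (if s = t then a * c + w^2 * (b * d)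
      else if s = 0 then a * d + b * c else w^2 * (a * d + b * c))"
    by (simp only: rep_eq)
  have rx: "rep x s' t' = (if s' = t' then a else if s' = 0 then b else w^2 * b)" for s' t'
    unfolding ab(3) using ab(1,2) by (rule rep_eq)
  have ry: "rep y s' t' = (if s' = t' then c else if s' = 0 then d else w^2 * d)" for s' t'
    unfolding cd(3) using cd(1,2) by (rule rep_eq)
  show ?thesis unfolding lhs rx ry using less_2_cases[OF assms(3)] less_2_cases[OF assms(4)]
    by (auto simp: numeral_2_eq_2 algebra_simps)
qed

lemma rep_cnj:
  assumes "x \<in> adjoin R w" "s < 2" "t < 2"
  shows "rep (cnj x) s t = cnj (rep x t s)"
proof -
  obtain a b where ab: "a \<in> R" "b \<in> R" "x = a + w * b" using assms(1) by (rule adjoinE)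
  have "cnj (w^2) * cnj b \<in> R"
    using cnj_closed[OF square_in] cnj_closed[OF ab(2)] by (rule subring_mult[OF subring])
  hence lhs: "rep (cnj x) s t = (if s = t then cnj a else if s = 0 then cnj (w^2) * cnj b
      else w^2 * (cnj (w^2) * cnj b))"
    unfolding ab(3) cnj_adjoin_eq by (rule rep_eq[OF cnj_closed[OF ab(1)]])
  have rhs: "rep x t s = (if t = s then a else if t = 0 then b else w^2 * b)"
    unfolding ab(3) using ab(1,2) by (rule rep_eq)
  have "w^2 * cnj (w^2) = 1"
    using complex_norm_square[of "w^2"] norm_w by (simp add: norm_power)
  hence "w^2 * (cnj (w^2) * cnj b) = cnj b" by (simp only: mult.assoc[symmetric] mult_1_left)
  thus ?thesis unfolding lhs rhs using less_2_cases[OF assms(2)] less_2_cases[OF assms(3)] by auto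
qed

lemma rep_mult_powers:
  assumes "x \<in> adjoin R w" "s < 2"
  shows "(\<Sum>t<2. rep x s t * w^t) = x * w^s"
proof -
  obtain a b where ab: "a \<in> R" "b \<in> R" "x = a + w * b" using assms(1) by (rule adjoinE)
  have rx: "rep x s t = (if s = t then a else if s = 0 then b else w^2 * b)" for t
    unfolding ab(3) using ab(1,2) by (rule rep_eq)
  show ?thesis unfolding rx unfolding ab(3) using less_2_cases[OF assms(2)]
    by (auto simp: numeral_2_eq_2 algebra_simps power2_eq_square)
qed

definition rep_mat :: "complex mat \<Rightarrow> complex mat" where
  "rep_mat M = mat (2 * dim_row M) (2 * dim_col M)
     (\<lambda>(i, j). rep (M $$ (i div 2, j div 2)) (i mod 2) (j mod 2))"

lemma rep_mat_dims [simp]: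
  "dim_row (rep_mat M) = 2 * dim_row M" "dim_col (rep_mat M) = 2 * dim_col M"
  by (simp_all add: rep_mat_def)

lemma rep_mat_carrier:
  assumes "M \<in> carrier_mat n m"
  shows "rep_mat M \<in> carrier_mat (2 * n) (2 * m)"
proof -
  have "dim_row M = n" "dim_col M = m" using carrier_matD[OF assms] .
  thus ?thesis by (intro carrier_matI) simp_all
qed

lemma index_rep_mat:
  "i < 2 * dim_row M \<Longrightarrow> j < 2 * dim_col M \<Longrightarrow>
    rep_mat M $$ (i, j) = rep (M $$ (i div 2, j div 2)) (i mod 2) (j mod 2)"
  by (simp add: rep_mat_def)

lemma entries_in_rep_mat: "entries_in M (adjoin R w) \<Longrightarrow> entries_in (rep_mat M) R"
  unfolding entries_in_def by (auto simp: index_rep_mat intro!: rep_in)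

lemma entries_in_adj: "entries_in M (adjoin R w) \<Longrightarrow> entries_in (adj M) (adjoin R w)"
  unfolding entries_in_def by (simp add: cnj_in_adjoin)

lemma rep_mat_mult:
  assumes M: "entries_in M (adjoin R w)" and N: "entries_in N (adjoin R w)"
    and dim: "dim_col M = dim_row N"
  shows "rep_mat (M * N) = rep_mat M * rep_mat N"
proof (rule eq_matI)
  fix i j
  assume "i < dim_row (rep_mat M * rep_mat N)" "j < dim_col (rep_mat M * rep_mat N)"
  hence i: "i < 2 * dim_row M" and j: "j < 2 * dim_col N" by simp_all
  define r s c t where "r = i div 2" "s = i mod 2" "c = j div 2" "t = j mod 2"
  have rc: "r < dim_row M" "c < dim_col N" "s < 2" "t < 2"
    using i j unfolding r_s_c_t_def by auto
  have entries: "M $$ (r, p) \<in> adjoin R w" "N $$ (p, c) \<in> adjoin R w" if "p < dim_col M" for p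
    using entries_inD[OF M rc(1) that] entries_inD[OF N _ rc(2)] that dim by simp_all
  have "(rep_mat M * rep_mat N) $$ (i, j)
      = (\<Sum>l<2 * dim_col M. rep_mat M $$ (i, l) * rep_mat N $$ (l, j))"
    using i j dim by (simp add: index_mult_mat_sum del: index_mult_mat)
  also have "\<dots> = (\<Sum>p<dim_col M. \<Sum>u<2. rep (M $$ (r, p)) s u * rep (N $$ (p, c)) u t)"
    using i j dim unfolding r_s_c_t_def sum_lessThan_double
    by (intro sum.cong refl) (simp add: index_rep_mat)
  also have "\<dots> = (\<Sum>p<dim_col M. rep (M $$ (r, p) * N $$ (p, c)) s t)"
    using entries rc by (simp add: rep_mult)
  also have "\<dots> = rep (\<Sum>p<dim_col M. M $$ (r, p) * N $$ (p, c)) s t"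
    using entries by (subst rep_sum) (auto intro: subring_mult[OF subring_adjoin_self])
  also have "\<dots> = rep ((M * N) $$ (r, c)) s t"
    using rc dim by (simp add: index_mult_mat_sum del: index_mult_mat)
  also have "\<dots> = rep_mat (M * N) $$ (i, j)"
    using i j unfolding r_s_c_t_def by (simp add: index_rep_mat)
  finally show "rep_mat (M * N) $$ (i, j) = (rep_mat M * rep_mat N) $$ (i, j)" ..
qed simp_all

lemma rep_mat_adj:
  assumes "entries_in M (adjoin R w)"
  shows "rep_mat (adj M) = adj (rep_mat M)"
proof (rule eq_matI)
  fix i j
  assume "i < dim_row (adj (rep_mat M))" "j < dim_col (adj (rep_mat M))"
  hence i: "i < 2 * dim_col M" and j: "j < 2 * dim_row M" by simp_all
  have "M $$ (j div 2, i div 2) \<in> adjoin R w" using entries_inD[OF assms] i j by simp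
  thus "rep_mat (adj M) $$ (i, j) = adj (rep_mat M) $$ (i, j)"
    using i j by (simp add: index_rep_mat rep_cnj)
qed simp_all

lemma rep_mat_one: "rep_mat (1\<^sub>m n) = 1\<^sub>m (2 * n)"
proof (rule eq_matI)
  fix i j
  assume "i < dim_row (1\<^sub>m (2 * n))" "j < dim_col (1\<^sub>m (2 * n))"
  hence ij: "i < 2 * n" "j < 2 * n" by simp_all
  have "i = j \<longleftrightarrow> i div 2 = j div 2 \<and> i mod 2 = j mod 2" by (metis div_mult_mod_eq)
  thus "rep_mat (1\<^sub>m n) $$ (i, j) = 1\<^sub>m (2 * n) $$ (i, j)"
    using ij by (auto simp: index_rep_mat rep_one rep_zero)
qed simp_all

lemma unitary_rep_mat:
  assumes U: "unitary_mat U" and entries: "entries_in U (adjoin R w)"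
  shows "unitary_mat (rep_mat U)"
proof -
  have sq: "dim_col U = dim_row U"
    and inv: "adj U * U = 1\<^sub>m (dim_row U)" "U * adj U = 1\<^sub>m (dim_row U)"
    using U unfolding unitary_mat_def by simp_all
  have "adj (rep_mat U) * rep_mat U = rep_mat (adj U * U)"
    using entries entries_in_adj[OF entries] sq by (simp add: rep_mat_adj rep_mat_mult)
  moreover have "rep_mat U * adj (rep_mat U) = rep_mat (U * adj U)"
    using entries entries_in_adj[OF entries] sq by (simp add: rep_mat_adj rep_mat_mult)
  ultimately show ?thesis using inv sq unfolding unitary_mat_def by (simp add: rep_mat_one)
qed

lemma rep_mat_mult_kron_vec:
  assumes M: "entries_in M (adjoin R w)" and u: "dim_vec u = dim_col M"
    and c: "dim_vec c = 2" "c $ 1 = w * c $ 0"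
  shows "rep_mat M *\<^sub>v kron_vec u c = kron_vec (M *\<^sub>v u) c"
proof (rule eq_vecI)
  fix i
  assume "i < dim_vec (kron_vec (M *\<^sub>v u) c)"
  hence i: "i < 2 * dim_row M" using c by (simp add: kron_vec_def)
  define r s where "r = i div 2" "s = i mod 2"
  have rs: "r < dim_row M" "s < 2" using i unfolding r_s_def by auto
  have c_pow: "c $ s = w ^ s * c $ 0" using c(2) less_2_cases[OF rs(2)] by auto
  have entries: "M $$ (r, p) \<in> adjoin R w" if "p < dim_col M" for p
    using entries_inD[OF M rs(1) that] .
  have "(rep_mat M *\<^sub>v kron_vec u c) $ i
      = (\<Sum>l<2 * dim_col M. rep_mat M $$ (i, l) * kron_vec u c $ l)"
    using i u c by (simp add: index_mult_mat_vec_sum kron_vec_def del: index_mult_mat_vec)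
  also have "\<dots> = (\<Sum>p<dim_col M. \<Sum>t<2. rep (M $$ (r, p)) s t * (u $ p * c $ t))"
    using i u c unfolding r_s_def sum_lessThan_double
    by (intro sum.cong refl) (simp add: index_rep_mat kron_vec_def)
  also have "\<dots> = (\<Sum>p<dim_col M. u $ p * c $ 0 * (\<Sum>t<2. rep (M $$ (r, p)) s t * w ^ t))"
    using c(2) by (simp add: numeral_2_eq_2 algebra_simps)
  also have "\<dots> = (\<Sum>p<dim_col M. u $ p * c $ 0 * (M $$ (r, p) * w ^ s))"
    using entries rs by (intro sum.cong refl) (simp add: rep_mult_powers)
  also have "\<dots> = (\<Sum>p<dim_col M. M $$ (r, p) * u $ p) * c $ s"
    unfolding c_pow sum_distrib_right by (simp add: sum_distrib_left mult_ac)
  also have "\<dots> = kron_vec (M *\<^sub>v u) c $ i"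
    using i u c unfolding r_s_def
    by (simp add: kron_vec_def index_mult_mat_vec_sum del: index_mult_mat_vec)
  finally show "(rep_mat M *\<^sub>v kron_vec u c) $ i = kron_vec (M *\<^sub>v u) c $ i" .
qed (simp add: kron_vec_def c(1))

lemma decomposition_exists:
  assumes "entries_in M (adjoin R w)"
  obtains A B where "A \<in> carrier_mat (dim_row M) (dim_col M)" "entries_in A R"
    "B \<in> carrier_mat (dim_row M) (dim_col M)" "entries_in B R" "M = A + w \<cdot>\<^sub>m B"
proof (rule that)
  let ?A = "mat (dim_row M) (dim_col M) (\<lambda>ij. rep (M $$ ij) 0 0)"
  let ?B = "mat (dim_row M) (dim_col M) (\<lambda>ij. rep (M $$ ij) 0 1)"
  show "?A \<in> carrier_mat (dim_row M) (dim_col M)" "?B \<in> carrier_mat (dim_row M) (dim_col M)"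
    by simp_all
  show "entries_in ?A R" "entries_in ?B R"
    using entries_inD[OF assms] by (simp_all add: entries_in_def rep_in)
  show "M = ?A + w \<cdot>\<^sub>m ?B"
    using entries_inD[OF assms] rep_decomposition by (intro eq_matI) simp_all
qed

lemma decomposition_unique:
  assumes A: "A \<in> carrier_mat n m" "entries_in A R" and B: "B \<in> carrier_mat n m" "entries_in B R"
    and A': "A' \<in> carrier_mat n m" "entries_in A' R" and B': "B' \<in> carrier_mat n m" "entries_in B' R"
    and eq: "A + w \<cdot>\<^sub>m B = A' + w \<cdot>\<^sub>m B'"
  shows "A = A'" "B = B'"
proof -
  have entries: "A $$ (i, j) = A' $$ (i, j)" "B $$ (i, j) = B' $$ (i, j)"
    if ij: "i < n" "j < m" for i j
  proof -
    have "A $$ (i, j) + w * B $$ (i, j) = A' $$ (i, j) + w * B' $$ (i, j)"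
      using arg_cong[OF eq, of "\<lambda>X. X $$ (i, j)"] A(1) B(1) A'(1) B'(1) ij by simp
    moreover have "A $$ (i, j) \<in> R" "B $$ (i, j) \<in> R" "A' $$ (i, j) \<in> R" "B' $$ (i, j) \<in> R"
      using entries_inD[OF A(2)] entries_inD[OF B(2)] entries_inD[OF A'(2)] entries_inD[OF B'(2)]
        A(1) B(1) A'(1) B'(1) ij by simp_all
    ultimately show "A $$ (i, j) = A' $$ (i, j)" "B $$ (i, j) = B' $$ (i, j)"
      using coeffs_unique by blast+
  qed
  show "A = A'" using A(1) A'(1) entries(1) by (intro eq_matI) auto
  show "B = B'" using B(1) B'(1) entries(2) by (intro eq_matI) auto
qed

lemma kron_decomposition_eq_rep_mat:
  assumes A: "A \<in> carrier_mat n m" "entries_in A R" and B: "B \<in> carrier_mat n m" "entries_in B R"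
  defines "\<Gamma> \<equiv> mat_of_rows_list 2 [[0, 1], [w^2, 0]]"
  shows "kron A (1\<^sub>m 2) + kron B \<Gamma> = rep_mat (A + w \<cdot>\<^sub>m B)"
proof (rule eq_matI)
  fix i j
  assume "i < dim_row (rep_mat (A + w \<cdot>\<^sub>m B))" "j < dim_col (rep_mat (A + w \<cdot>\<^sub>m B))"
  hence i: "i < 2 * n" and j: "j < 2 * m" using A(1) B(1) by auto
  define r s c t where "r = i div 2" "s = i mod 2" "c = j div 2" "t = j mod 2"
  have rc: "r < n" "c < m" "s < 2" "t < 2" using i j unfolding r_s_c_t_def by auto
  hence AB: "A $$ (r, c) \<in> R" "B $$ (r, c) \<in> R"
    using entries_inD[OF A(2)] entries_inD[OF B(2)] A(1) B(1) by simp_all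
  have kron: "(kron A (1\<^sub>m 2) + kron B \<Gamma>) $$ (i, j)
      = A $$ (r, c) * 1\<^sub>m 2 $$ (s, t) + B $$ (r, c) * \<Gamma> $$ (s, t)"
    using i j A(1) B(1) unfolding r_s_c_t_def \<Gamma>_def
    by (simp add: kron_def mat_of_rows_list_def numeral_2_eq_2)
  have rep: "rep_mat (A + w \<cdot>\<^sub>m B) $$ (i, j) = rep (A $$ (r, c) + w * B $$ (r, c)) s t"
    using i j A(1) B(1) unfolding r_s_c_t_def by (simp add: index_rep_mat)
  show "(kron A (1\<^sub>m 2) + kron B \<Gamma>) $$ (i, j) = rep_mat (A + w \<cdot>\<^sub>m B) $$ (i, j)"
    unfolding kron rep rep_eq[OF AB] using less_2_cases[OF rc(3)] less_2_cases[OF rc(4)]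
    by (auto simp: \<Gamma>_def mat_of_rows_list_def)
qed (use A(1) B(1) in \<open>simp_all add: kron_def \<Gamma>_def mat_of_rows_list_def\<close>)

end


section \<open>The catalytic embedding\<close>

lemma quadratic_extension_Rring:
  assumes "k \<ge> 2"
  shows "quadratic_extension (Rring (3 * 2^(k-1))) (zeta (3 * 2^k))"
proof (rule quadratic_extension.intro)
  show "is_subring (Rring (3 * 2^(k-1)))" by (rule subring_Rring)
  show "cnj x \<in> Rring (3 * 2^(k-1))" if "x \<in> Rring (3 * 2^(k-1))" for x
    using that by (simp add: cnj_in_Rring)
  show "zeta (3 * 2^k) ^ 2 \<in> Rring (3 * 2^(k-1))"
    using assms zeta_3_power2_square zeta_in_Rring by simp
  show "cmod (zeta (3 * 2^k)) = 1" by simp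
  show "b = 0" if "a \<in> Rring (3 * 2^(k-1))" "b \<in> Rring (3 * 2^(k-1))" "a + zeta (3 * 2^k) * b = 0"
    for a b
    using Rring_zeta_independent[OF assms that] .
qed

lemma entries_in_Rring_adjoin:
  assumes "k \<ge> 1" "entries_in M (Rring (3 * 2^k))"
  shows "entries_in M (adjoin (Rring (3 * 2^(k-1))) (zeta (3 * 2^k)))"
proof -
  have double: "2 * (3 * 2^(k-1)) = (3 * 2^k :: nat)" using assms(1) by (cases k) simp_all
  have "Rring (3 * 2^k) \<subseteq> adjoin (Rring (3 * 2^(k-1))) (zeta (3 * 2^k))"
    using Rring_double_subset_adjoin[of "3 * 2^(k-1)", unfolded double] by simp
  thus ?thesis using assms(2) by (rule entries_in_mono[rotated])
qed

lemma decomp_eq: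
  assumes k: "k \<ge> 2"
    and A: "A \<in> carrier_mat (dim_row M) (dim_col M)" "entries_in A (Rring (3 * 2^(k-1)))"
    and B: "B \<in> carrier_mat (dim_row M) (dim_col M)" "entries_in B (Rring (3 * 2^(k-1)))"
    and M: "M = A + zeta (3 * 2^k) \<cdot>\<^sub>m B"
  shows "decomp k M = (A, B)"
  unfolding decomp_def
proof (rule the_equality)
  interpret quadratic_extension "Rring (3 * 2^(k-1))" "zeta (3 * 2^k)"
    using k by (rule quadratic_extension_Rring)
  fix p
  assume "case p of (A', B') \<Rightarrow> A' \<in> carrier_mat (dim_row M) (dim_col M)
    \<and> B' \<in> carrier_mat (dim_row M) (dim_col M) \<and> entries_in A' (Rring (3 * 2^(k-1)))
    \<and> entries_in B' (Rring (3 * 2^(k-1))) \<and> M = A' + zeta (3 * 2^k) \<cdot>\<^sub>m B'"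
  moreover obtain A' B' where p: "p = (A', B')" by (cases p)
  ultimately have A': "A' \<in> carrier_mat (dim_row M) (dim_col M)" "entries_in A' (Rring (3 * 2^(k-1)))"
    and B': "B' \<in> carrier_mat (dim_row M) (dim_col M)" "entries_in B' (Rring (3 * 2^(k-1)))"
    and M': "M = A' + zeta (3 * 2^k) \<cdot>\<^sub>m B'"
    by (simp_all only: prod.case) blast+
  have "A' + zeta (3 * 2^k) \<cdot>\<^sub>m B' = A + zeta (3 * 2^k) \<cdot>\<^sub>m B"
    using trans[OF sym[OF M'] M] .
  hence "A' = A" "B' = B" by (rule decomposition_unique[OF A' B' A B])+
  thus "p = (A, B)" unfolding p by simp
qed (simp only: prod.case, intro conjI A B M)

lemma psi_eq_rep_mat:
  assumes k: "k \<ge> 2" and M: "entries_in M (Rring (3 * 2^k))"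
  shows "psi k M = quadratic_extension.rep_mat (Rring (3 * 2^(k-1))) (zeta (3 * 2^k)) M"
proof -
  interpret quadratic_extension "Rring (3 * 2^(k-1))" "zeta (3 * 2^k)"
    using k by (rule quadratic_extension_Rring)
  have "entries_in M (adjoin (Rring (3 * 2^(k-1))) (zeta (3 * 2^k)))"
    by (rule entries_in_Rring_adjoin[OF _ M]) (use k in linarith)
  then obtain A B
    where A: "A \<in> carrier_mat (dim_row M) (dim_col M)" "entries_in A (Rring (3 * 2^(k-1)))"
      and B: "B \<in> carrier_mat (dim_row M) (dim_col M)" "entries_in B (Rring (3 * 2^(k-1)))"
      and M_eq: "M = A + zeta (3 * 2^k) \<cdot>\<^sub>m B"
    by (rule decomposition_exists)
  have "Gamma k = mat_of_rows_list 2 [[0, 1], [zeta (3 * 2^k) ^ 2, 0]]"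
    using k by (simp add: Gamma_def zeta_3_power2_square)
  thus ?thesis unfolding psi_def decomp_eq[OF k A B M_eq]
    using kron_decomposition_eq_rep_mat[OF A B] M_eq by simp
qed

lemma
  shows dim_dvec: "dim_vec (dvec k) = 2"
    and dvec_1: "dvec k $ 1 = zeta (3 * 2^k) * dvec k $ 0"
    and sum_norm_dvec: "(\<Sum>i<2. (cmod (dvec k $ i))^2) = 1"
  by (simp_all add: dvec_def vec_of_list_index numeral_2_eq_2 norm_divide power_divide
      del: vec_of_list_Cons)

lemma
  assumes k: "k \<ge> 2" and U: "U \<in> unitaries_over (3 * 2^k)"
  shows psi_in_unitaries_over: "psi k U \<in> unitaries_over (3 * 2^(k-1))"
    and psi_carrier: "U \<in> carrier_mat d d \<Longrightarrow> psi k U \<in> carrier_mat (2 * d) (2 * d)"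
    and psi_mult_kron_dvec: "U \<in> carrier_mat d d \<Longrightarrow> u \<in> carrier_vec d \<Longrightarrow>
      psi k U *\<^sub>v kron_vec u (dvec k) = kron_vec (U *\<^sub>v u) (dvec k)"
proof -
  interpret quadratic_extension "Rring (3 * 2^(k-1))" "zeta (3 * 2^k)"
    using k by (rule quadratic_extension_Rring)
  have U_unitary: "unitary_mat U" and U_entries: "entries_in U (Rring (3 * 2^k))"
    using U by (simp_all add: unitaries_over_def)
  have U': "entries_in U (adjoin (Rring (3 * 2^(k-1))) (zeta (3 * 2^k)))"
    by (rule entries_in_Rring_adjoin[OF _ U_entries]) (use k in linarith)
  have psi: "psi k U = rep_mat U" by (rule psi_eq_rep_mat[OF k U_entries])
  show "psi k U \<in> unitaries_over (3 * 2^(k-1))"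
    unfolding psi unitaries_over_def using unitary_rep_mat[OF U_unitary U'] entries_in_rep_mat[OF U']
    by simp
  show "psi k U \<in> carrier_mat (2 * d) (2 * d)" if "U \<in> carrier_mat d d"
    unfolding psi using that by (rule rep_mat_carrier)
  show "psi k U *\<^sub>v kron_vec u (dvec k) = kron_vec (U *\<^sub>v u) (dvec k)"
    if "U \<in> carrier_mat d d" "u \<in> carrier_vec d"
    unfolding psi using rep_mat_mult_kron_vec[OF U' _ dim_dvec dvec_1] that by simp
qed

theorem proposition5p4:
  fixes k :: nat
  assumes "k \<ge> 2"
  shows "catalytic_embedding 2 (unitaries_over (3 * 2^k)) (unitaries_over (3 * 2^(k-1))) (psi k) (dvec k)"
  unfolding catalytic_embedding_def dim_dvec
  using sum_norm_dvec psi_in_unitaries_over[OF assms] psi_carrier[OF assms]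
    psi_mult_kron_dvec[OF assms]
  by blast

end
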